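(* For $\varsigma\in[\tfrac14,\tfrac12]$ and $\nu\in(0,1)$ let $$\hat M(\varsigma,\nu):=\begin{pmatrix}-\frac23\varsigma\log^3\nu+\frac12 & -\nu & \frac12\nu^2\\ -\nu & -\frac23(1-2\varsigma)\log^3\nu+2(1+\log\nu) & -\nu\\ \frac12\nu^2 & -\nu & -\frac23\varsigma\log^3\nu+\frac12\end{pmatrix}.$$ Two of the three eigenvalues of $\hat M(\varsigma,\nu)$ are nonnegative for all $\nu\in(0,1)$ and $\varsigma\in[\tfrac14,\tfrac12]$. The third eigenvalue is $E_3(\varsigma,\nu):=\frac1{12}\big(e_1(\varsigma,\nu)-\sqrt{e_2(\varsigma,\nu)}\big)$, where $$e_1=15+3\nu^2+(12-4\log^2\nu+4\varsigma\log^2\nu)\log\nu,$$ $$\begin{aligned}e_2=\;&81+234\nu^2+9\nu^4+216\log\nu-72\nu^2\log\nu+144\log^2\nu-72\log^3\nu+24\nu^2\log^3\nu-96\log^4\nu+16\log^6\nu\\&+(216\log^3\nu-72\nu^2\log^3\nu+288\log^4\nu-96\log^6\nu)\varsigma+144\log^6\nu\,\varsigma^2,\end{aligned}$$ and $E_3(\varsigma,\nu)\ge0$ if and only if $\varsigma\le\varsigma_2(\nu)$, where $$\varsigma_2(\nu):=\frac{1}{16\log^6\nu}\big(f(\nu)+\sqrt{g(\nu)}\big),\quad f(\nu):=\big(6(-1+\nu^2)+4(-3+\log^2\nu)\log\nu\big)\log^3\nu,$$ $$g(\nu):=96\log^6\nu\big(3(1-\nu^2)+3(1+\nu^2)\l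og\nu-(1+\nu^2)\log^3\nu\big)+\big(6(-1+\nu^2)\log^3\nu+4(\log^2\nu-3)\log^4\nu\big)^2.$$
   Context: This is the case $c_u=c_v$ for the monolayer: with $c_0,c_u,c_v\ge0$ not all zero, $\varsigma=\frac{c_v+c_0}{2(c_0+c_u+c_v)}$ and $\nu=e^{-2\pi\delta_m/L}$, $\delta_m=(\tfrac32(c_0+c_u+c_v))^{1/3}$; the assumption $c_u=c_v$ forces $\varsigma\in[\tfrac14,\tfrac12]$. The matrix $\hat M$ represents (up to the factor $L/\pi$) the first Fourier mode of the second variation of the energy at the monolayer. *)

theory Defs
  imports "HOL-Analysis.Analysis"
begin

text \<open>Here log denotes the natural logarithm ln.\<close>

definition Mhat :: "real \<Rightarrow> real \<Rightarrow> real^3^3" where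
  "Mhat s v = vector [
     vector [- (2/3) * s * (ln v) ^ 3 + 1/2, -v, (1/2) * v ^ 2],
     vector [-v, - (2/3) * (1 - 2 * s) * (ln v) ^ 3 + 2 * (1 + ln v), -v],
     vector [(1/2) * v ^ 2, -v, - (2/3) * s * (ln v) ^ 3 + 1/2]]"

definition charpoly3 :: "real^3^3 \<Rightarrow> real \<Rightarrow> real" where
  "charpoly3 A x = det (x *\<^sub>R mat 1 - A)"

definition e1 :: "real \<Rightarrow> real \<Rightarrow> real" where
  "e1 s v = 15 + 3 * v^2 + (12 - 4 * (ln v)^2 + 4 * s * (ln v)^2) * ln v"

definition e2 :: "real \<Rightarrow> real \<Rightarrow> real" where
  "e2 s v = 81 + 234 * v^2 + 9 * v^4 + 216 * ln v - 72 * v^2 * ln v + 144 * (ln v)^2 - 72 * (ln v)^3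
      + 24 * v^2 * (ln v)^3 - 96 * (ln v)^4 + 16 * (ln v)^6
      + (216 * (ln v)^3 - 72 * v^2 * (ln v)^3 + 288 * (ln v)^4 - 96 * (ln v)^6) * s
      + 144 * (ln v)^6 * s^2"

definition E3 :: "real \<Rightarrow> real \<Rightarrow> real" where
  "E3 s v = (1/12) * (e1 s v - sqrt (e2 s v))"

definition f_aux :: "real \<Rightarrow> real" where
  "f_aux v = (6 * (-1 + v^2) + 4 * (-3 + (ln v)^2) * ln v) * (ln v)^3"

definition g_aux :: "real \<Rightarrow> real" where
  "g_aux v = 96 * (ln v)^6 * (3 * (1 - v^2) + 3 * (1 + v^2) * ln v - (1 + v^2) * (ln v)^3)
      + (6 * (-1 + v^2) * (ln v)^3 + 4 * ((ln v)^2 - 3) * (ln v)^4)^2"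

definition varsigma2 :: "real \<Rightarrow> real" where
  "varsigma2 v = (1 / (16 * (ln v)^6)) * (f_aux v + sqrt (g_aux v))"

end

(*
  The matrix has the persymmetric shape [[a, -v, c], [-v, b, -v], [c, -v, a]] with c = v^2/2.
  The antisymmetric vector (1, 0, -1) is an eigenvector with eigenvalue a - c >= 0, and the
  remaining two eigenvalues are the roots of x^2 - (a + b + c) x + ((a + c) b - 2 v^2), whose
  discriminant (a + c - b)^2 + 8 v^2 is nonnegative. Since e1/6 is the sum of these roots and
  e2/36 their discriminant, the larger root is nonnegative (the sum is positive) and the smaller
  one, E3, is nonnegative exactly when their product P = (a + c) b - 2 v^2 is. Finally
  -288 (ln v)^6 P = w^2 - g with w = 16 (ln v)^6 s - f > 0, so P >= 0 iff w <= sqrt g, which is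
  the inequality s <= varsigma2 v.
*)
theory Submission
  imports Defs
begin

definition persym3 :: "real \<Rightarrow> real \<Rightarrow> real \<Rightarrow> real \<Rightarrow> real^3^3" where
  "persym3 a b c p = vector [vector [a, p, c], vector [p, b, p], vector [c, p, a]]"

lemma charpoly3_persym3:
  "charpoly3 (persym3 a b c p) x
   = (x - (a - c)) * (x^2 - (a + b + c) * x + ((a + c) * b - 2 * p^2))"
  unfolding charpoly3_def persym3_def det_3
  by (simp add: vector_def mat_def algebra_simps power2_eq_square)

lemma quadratic_eq_mult_roots:
  fixes t P x :: real
  assumes "0 \<le> t^2 - 4 * P"
  shows "x^2 - t * x + P
         = (x - (t + sqrt (t^2 - 4 * P)) / 2) * (x - (t - sqrt (t^2 - 4 * P)) / 2)"
proof -
  have "sqrt (t^2 - 4 * P) ^ 2 = t^2 - 4 * P" using assms by simp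
  then show ?thesis by (simp add: field_simps power2_eq_square)
qed

lemma smaller_root_nonneg_iff:
  fixes t P :: real
  assumes "0 \<le> t" "0 \<le> t^2 - 4 * P"
  shows "0 \<le> (t - sqrt (t^2 - 4 * P)) / 2 \<longleftrightarrow> 0 \<le> P"
proof -
  have "0 \<le> (t - sqrt (t^2 - 4 * P)) / 2 \<longleftrightarrow> sqrt (t^2 - 4 * P) \<le> sqrt (t^2)"
    using assms(1) by simp
  also have "\<dots> \<longleftrightarrow> 0 \<le> P" by (subst real_sqrt_le_iff) linarith
  finally show ?thesis .
qed

lemma le_sqrt_iff_power2_le:
  fixes w g :: real
  assumes "0 \<le> w"
  shows "w \<le> sqrt g \<longleftrightarrow> w^2 \<le> g"
  using assms real_le_rsqrt sqrt_ge_absD[of w g] by auto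

lemma add_one_less_exp:
  fixes x :: real
  assumes "x \<noteq> 0"
  shows "1 + x < exp x"
proof (cases "1 + x/2 \<ge> 0")
  case True
  have "0 < x^2" using assms by simp
  then have "1 + x < (1 + x/2)^2"
    by (simp add: power2_eq_square field_simps)
  also have "\<dots> \<le> exp (x/2) ^ 2"
    using True by (intro power_mono) auto
  also have "\<dots> = exp x"
    by (simp add: power2_eq_square flip: exp_add)
  finally show ?thesis .
next
  case False
  then show ?thesis
    using exp_gt_zero[of x] by linarith
qed

definition Mhat_outer :: "real \<Rightarrow> real \<Rightarrow> real" where
  "Mhat_outer s v = - (2/3) * s * (ln v)^3 + 1/2"

definition Mhat_centre :: "real \<Rightarrow> real \<Rightarrow> real" where
  "Mhat_centre s v = - (2/3) * (1 - 2 * s) * (ln v)^3 + 2 * (1 + ln v)"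

(* The two eigenvalues of Mhat other than Mhat_outer s v - v^2/2 have this sum and product. *)

definition Mhat_root_sum :: "real \<Rightarrow> real \<Rightarrow> real" where
  "Mhat_root_sum s v = Mhat_outer s v + Mhat_centre s v + v^2/2"

definition Mhat_root_prod :: "real \<Rightarrow> real \<Rightarrow> real" where
  "Mhat_root_prod s v = (Mhat_outer s v + v^2/2) * Mhat_centre s v - 2 * v^2"

lemma charpoly3_Mhat:
  "charpoly3 (Mhat s v) x
   = (x - (Mhat_outer s v - v^2/2)) * (x^2 - Mhat_root_sum s v * x + Mhat_root_prod s v)"
proof -
  have "Mhat s v = persym3 (Mhat_outer s v) (Mhat_centre s v) (v^2/2) (-v)"
    unfolding Mhat_def persym3_def Mhat_outer_def Mhat_centre_def by simp
  then show ?thesis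
    by (simp add: charpoly3_persym3 Mhat_root_sum_def Mhat_root_prod_def)
qed

lemma Mhat_root_discriminant_nonneg: "0 \<le> Mhat_root_sum s v ^ 2 - 4 * Mhat_root_prod s v"
proof -
  have "Mhat_root_sum s v ^ 2 - 4 * Mhat_root_prod s v
        = (Mhat_outer s v + v^2/2 - Mhat_centre s v)^2 + 8 * v^2"
    unfolding Mhat_root_sum_def Mhat_root_prod_def by (simp add: power2_eq_square algebra_simps)
  then show ?thesis by simp
qed

lemma e1_eq: "e1 s v = 6 * Mhat_root_sum s v"
  unfolding e1_def Mhat_root_sum_def Mhat_outer_def Mhat_centre_def
  by (simp add: field_simps power2_eq_square power3_eq_cube)

lemma e2_eq: "e2 s v = 36 * (Mhat_root_sum s v ^ 2 - 4 * Mhat_root_prod s v)"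
  unfolding e2_def Mhat_root_sum_def Mhat_root_prod_def Mhat_outer_def Mhat_centre_def
  by (simp add: algebra_simps power2_eq_square power3_eq_cube) algebra

lemma E3_eq_smaller_root:
  "E3 s v = (Mhat_root_sum s v - sqrt (Mhat_root_sum s v ^ 2 - 4 * Mhat_root_prod s v)) / 2"
proof -
  have "sqrt (e2 s v) = 6 * sqrt (Mhat_root_sum s v ^ 2 - 4 * Mhat_root_prod s v)"
    unfolding e2_eq real_sqrt_mult by (simp add: real_sqrt_unique)
  then show ?thesis unfolding E3_def e1_eq by simp
qed

lemma Mhat_root_prod_identity:
  "-288 * (ln v)^6 * Mhat_root_prod s v = (16 * (ln v)^6 * s - f_aux v)^2 - g_aux v"
  unfolding Mhat_root_prod_def Mhat_outer_def Mhat_centre_def f_aux_def g_aux_def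
  by (simp add: algebra_simps power2_eq_square power3_eq_cube) algebra

lemma e1_pos:
  assumes "s \<le> 1/2" "0 < v" "v < 1"
  shows "0 < e1 s v"
proof -
  define u where "u = - ln v"
  have u: "0 < u" using assms(2,3) by (simp add: u_def)
  have "e1 s v = 15 - 12 * u + 4 * (1 - s) * u^3 + 3 * v^2"
    unfolding e1_def u_def by (simp add: algebra_simps power2_eq_square power3_eq_cube)
  moreover have "2 * u^3 \<le> 4 * (1 - s) * u^3"
    using assms(1) u by (simp add: mult_right_mono)
  moreover have "15 - 12 * u + 2 * u^3 = 2 * (u - 3/2)^2 * (u + 3) + 3/2 * u + 3/2"
    by (simp add: field_simps power2_eq_square power3_eq_cube)
  moreover have "0 \<le> 2 * (u - 3/2)^2 * (u + 3)" using u by simp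
  moreover have "0 \<le> 3 * v^2" by simp
  ultimately show ?thesis using u by linarith
qed

lemma Mhat_outer_ge_corner:
  assumes "0 \<le> s" "0 < v" "v < 1"
  shows "v^2/2 \<le> Mhat_outer s v"
proof -
  have "(ln v)^3 < 0" using assms(2,3) by (simp add: power_less_zero_eq)
  then have "0 \<le> - (2/3) * s * (ln v)^3"
    using assms(1) by (simp add: mult_nonneg_nonpos)
  moreover have "v^2 \<le> 1" using assms(2,3) by (simp add: power_le_one)
  ultimately show ?thesis unfolding Mhat_outer_def by linarith
qed

lemma f_aux_less:
  assumes "1/4 \<le> s" "0 < v" "v < 1"
  shows "f_aux v < 16 * (ln v)^6 * s"
proof -
  have "exp (2 * ln v) = v^2"
    using exp_of_nat_mult[of 2 "ln v"] assms(2) by simp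
  then have "1 + 2 * ln v < v^2"
    using add_one_less_exp[of "2 * ln v"] assms(2,3) by simp
  moreover have "(ln v)^3 < 0" using assms(2,3) by (simp add: power_less_zero_eq)
  ultimately have "0 < 6 * (ln v)^3 * (1 - v^2 + 2 * ln v)"
    by (simp add: mult_neg_neg)
  moreover have "0 \<le> 4 * (ln v)^6 * (4 * s - 1)" using assms(1) by simp
  moreover have "16 * (ln v)^6 * s - f_aux v
      = 4 * (ln v)^6 * (4 * s - 1) + 6 * (ln v)^3 * (1 - v^2 + 2 * ln v)"
    unfolding f_aux_def by algebra
  ultimately show ?thesis by linarith
qed

lemma le_varsigma2_iff:
  assumes "1/4 \<le> s" "0 < v" "v < 1"
  shows "s \<le> varsigma2 v \<longleftrightarrow> 0 \<le> Mhat_root_prod s v"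
proof -
  define w where "w = 16 * (ln v)^6 * s - f_aux v"
  have L6: "0 < (ln v)^6" using assms(2,3) by simp
  have "varsigma2 v = (f_aux v + sqrt (g_aux v)) / (16 * (ln v)^6)"
    by (simp add: varsigma2_def)
  then have "s \<le> varsigma2 v \<longleftrightarrow> 16 * (ln v)^6 * s \<le> f_aux v + sqrt (g_aux v)"
    using L6 by (simp add: pos_le_divide_eq mult.commute)
  also have "\<dots> \<longleftrightarrow> w \<le> sqrt (g_aux v)"
    unfolding w_def by linarith
  also have "\<dots> \<longleftrightarrow> w^2 \<le> g_aux v"
    using f_aux_less[OF assms] by (intro le_sqrt_iff_power2_le) (simp add: w_def)
  also have "\<dots> \<longleftrightarrow> -288 * (ln v)^6 * Mhat_root_prod s v \<le> 0"
    using Mhat_root_prod_identity[of v s] unfolding w_def[symmetric] by linarith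
  also have "\<dots> \<longleftrightarrow> 0 \<le> Mhat_root_prod s v"
    using L6 by (simp add: mult_le_0_iff zero_le_mult_iff)
  finally show ?thesis .
qed

theorem lemma4p12:
  fixes s v :: real
  assumes "1/4 \<le> s" "s \<le> 1/2" "0 < v" "v < 1"
  shows "(\<exists>l1 l2. 0 \<le> l1 \<and> 0 \<le> l2 \<and>
            (\<forall>x. charpoly3 (Mhat s v) x = (x - l1) * (x - l2) * (x - E3 s v)))
         \<and> (0 \<le> E3 s v \<longleftrightarrow> s \<le> varsigma2 v)"
proof -
  let ?t = "Mhat_root_sum s v" and ?d = "Mhat_root_sum s v ^ 2 - 4 * Mhat_root_prod s v"
  have t: "0 < ?t" using e1_pos[OF assms(2-4)] by (simp add: e1_eq)
  have d: "0 \<le> ?d" by (rule Mhat_root_discriminant_nonneg)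
  have "charpoly3 (Mhat s v) x
        = (x - (Mhat_outer s v - v^2/2)) * ((x - (?t + sqrt ?d) / 2) * (x - E3 s v))" for x
    unfolding charpoly3_Mhat E3_eq_smaller_root quadratic_eq_mult_roots[OF d, symmetric] ..
  moreover have "0 \<le> Mhat_outer s v - v^2/2"
    using Mhat_outer_ge_corner[of s v] assms by simp
  moreover have "0 \<le> (?t + sqrt ?d) / 2" using t d by simp
  moreover have "0 \<le> E3 s v \<longleftrightarrow> s \<le> varsigma2 v"
    using smaller_root_nonneg_iff[OF less_imp_le[OF t] d] le_varsigma2_iff[OF assms(1,3,4)]
    unfolding E3_eq_smaller_root by blast
  ultimately show ?thesis by (metis mult.assoc)
qed

end
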